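(* Consider a Markov decision process with continuous state space $\mathcal{S}$, continuous action space $\mathcal{A}$, transition density $p(\mathbf{s}'|\mathbf{s},\mathbf{a})$ and discount factor $\gamma\in(0,1)$, and let $r_1,r_2$ be bounded reward functions with optimal soft Q-functions (temperature $1$) $Q_1^*, Q_2^*$ and optimal soft policies $\pi_i^*(\mathbf{a}|\mathbf{s})\propto\exp(Q_i^*(\mathbf{s},\mathbf{a}))$. Let $Q_\Sigma=\frac12(Q_1^*+Q_2^* )$, $r_\mathcal{C}=\frac12(r_1+r_2)$, let $Q_\mathcal{C}^*$ be the optimal soft Q-function for $r_\mathcal{C}$, and let $\pi_\Sigma(\mathbf{a}|\mathbf{s}) \propto \exp(Q_\Sigma(\mathbf{s},\mathbf{a}))$ be the composed policy. Let $C^*$ be the fixed point of $$C(\mathbf{s},\mathbf{a}) \leftarrow \gamma\, \mathbb{E}_{\mathbf{s}'\sim p(\mathbf{s}'|\mathbf{s},\mathbf{a})}\Big[ D_{1/2}\big(\pi_1^*(\cdot|\mathbf{s}')\,\|\,\pi_2^*(\cdot|\mathbf{s}')\big) + \max_{\mathbf{a}'\in\mathcal{A}} C(\mathbf{s}',\mathbf{a}')\Big],$$ and let $D^*$ be the fixed point of $$D(\mathbf{s},\mathbf{a}) \leftarrow \gamma\,\mathbb{E}_{\mathbf{s}'\sim p(\mathbf{s}'|\mathbf{s},\mathbf{a})}\Big[\mathbb{E}_{\mathbf{a}'\sim\pi_\Sigma(\mathbf{a}'|\mathbf{s}')}\big[C^*(\mathbf{s}',\mathbf{a}') + D(\mathbf{s}',\mathbf{a}')\big]\Big].$$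 Then the soft Q-function $Q_\mathcal{C}^{\pi_\Sigma}$ of the policy $\pi_\Sigma$ for the reward $r_\mathcal{C}$ satisfies, for all $\mathbf{s}\in\mathcal{S}$, $\mathbf{a}\in\mathcal{A}$, $$Q_\mathcal{C}^{\pi_\Sigma}(\mathbf{s},\mathbf{a}) \ge Q_\mathcal{C}^*(\mathbf{s},\mathbf{a}) - D^*(\mathbf{s},\mathbf{a}).$$
   Context: Soft (maximum-entropy) reinforcement learning with temperature $1$: for a bounded reward $r$, the soft Bellman backup maps a bounded $Q$ to $r(\mathbf{s},\mathbf{a}) + \gamma\,\mathbb{E}_{\mathbf{s}'\sim p(\cdot|\mathbf{s},\mathbf{a})}[\log\int_{\mathcal{A}}\exp(Q(\mathbf{s}',\mathbf{a}'))\,d\mathbf{a}']$; the optimal soft Q-function for $r$ is its unique fixed point, and the optimal soft policy is proportional to $\exp$ of it. For a policy $\pi$, its soft Q-function $Q^\pi$ for reward $r$ is the fixed point of the soft policy evaluation operator $Q(\mathbf{s},\mathbf{a}) \leftarrow r(\mathbf{s},\mathbf{a}) + \gamma\,\mathbb{E}_{\mathbf{s}'\sim p(\cdot|\mathbf{s},\mathbf{a})}\big[\mathbb{E}_{\mathbf{a}'\sim\pi(\cdot|\mathbf{s}')}[Q(\mathbf{s}',\mathbf{a}') - \log\pi(\mathbf{a}'|\mathbf{s}')]\big]$. $D_{1/2}(p\|q) = -2\log\int\sqrt{p q}$ is the Rényi divergence of order $1/2$. *)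

theory Defs
  imports "HOL-Analysis.Analysis"
begin

text \<open>States live in a measure space Ms (reference measure for the
transition density), actions in a measure space Ma (reference measure d a,
e.g. Lebesgue measure on a bounded action set). A "Q-like" function is a
curried function 's => 'a => real; policies are densities w.r.t. Ma.\<close>

definition soft_mdp ::
  "'s measure \<Rightarrow> 'a measure \<Rightarrow> ('s \<Rightarrow> 'a \<Rightarrow> 's \<Rightarrow> real) \<Rightarrow> real \<Rightarrow> bool" where
  "soft_mdp Ms Ma p \<gamma> \<longleftrightarrow>
     sigma_finite_measure Ms \<and>
     0 < emeasure Ma (space Ma) \<and> emeasure Ma (space Ma) < \<infinity> \<and>
     0 < \<gamma> \<and> \<gamma> < 1 \<and>
     (\<lambda>((s, a), s'). p s a s') \<in> borel_measurable ((Ms \<Otimes>\<^sub>M Ma) \<Otimes>\<^sub>M Ms) \<and>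
     (\<forall>s\<in>space Ms. \<forall>a\<in>space Ma. \<forall>s'\<in>space Ms. 0 \<le> p s a s') \<and>
     (\<forall>s\<in>space Ms. \<forall>a\<in>space Ma. (\<integral>s'. p s a s' \<partial>Ms) = 1)"

definition bounded_measurable_SA ::
  "'s measure \<Rightarrow> 'a measure \<Rightarrow> ('s \<Rightarrow> 'a \<Rightarrow> real) \<Rightarrow> bool" where
  "bounded_measurable_SA Ms Ma f \<longleftrightarrow>
     (\<exists>B. \<forall>s\<in>space Ms. \<forall>a\<in>space Ma. \<bar>f s a\<bar> \<le> B) \<and>
     case_prod f \<in> borel_measurable (Ms \<Otimes>\<^sub>M Ma)"

definition next_exp ::
  "'s measure \<Rightarrow> ('s \<Rightarrow> 'a \<Rightarrow> 's \<Rightarrow> real) \<Rightarrow> 's \<Rightarrow> 'a \<Rightarrow> ('s \<Rightarrow> real) \<Rightarrow> real" where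
  "next_exp Ms p s a g = (\<integral>s'. p s a s' * g s' \<partial>Ms)"

definition soft_value :: "'a measure \<Rightarrow> ('s \<Rightarrow> 'a \<Rightarrow> real) \<Rightarrow> 's \<Rightarrow> real" where
  "soft_value Ma Q s = ln (\<integral>a. exp (Q s a) \<partial>Ma)"

definition soft_policy :: "'a measure \<Rightarrow> ('s \<Rightarrow> 'a \<Rightarrow> real) \<Rightarrow> 's \<Rightarrow> 'a \<Rightarrow> real" where
  "soft_policy Ma Q s a = exp (Q s a) / (\<integral>b. exp (Q s b) \<partial>Ma)"

definition optimal_soft_Q ::
  "'s measure \<Rightarrow> 'a measure \<Rightarrow> ('s \<Rightarrow> 'a \<Rightarrow> 's \<Rightarrow> real) \<Rightarrow> real \<Rightarrow>
   ('s \<Rightarrow> 'a \<Rightarrow> real) \<Rightarrow> ('s \<Rightarrow> 'a \<Rightarrow> real) \<Rightarrow> bool" where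
  "optimal_soft_Q Ms Ma p \<gamma> r Q \<longleftrightarrow>
     bounded_measurable_SA Ms Ma Q \<and>
     (\<forall>s\<in>space Ms. \<forall>a\<in>space Ma.
        Q s a = r s a + \<gamma> * next_exp Ms p s a (soft_value Ma Q))"

definition policy_soft_Q ::
  "'s measure \<Rightarrow> 'a measure \<Rightarrow> ('s \<Rightarrow> 'a \<Rightarrow> 's \<Rightarrow> real) \<Rightarrow> real \<Rightarrow>
   ('s \<Rightarrow> 'a \<Rightarrow> real) \<Rightarrow> ('s \<Rightarrow> 'a \<Rightarrow> real) \<Rightarrow> ('s \<Rightarrow> 'a \<Rightarrow> real) \<Rightarrow> bool" where
  "policy_soft_Q Ms Ma p \<gamma> r \<pi> Q \<longleftrightarrow>
     bounded_measurable_SA Ms Ma Q \<and>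
     (\<forall>s\<in>space Ms. \<forall>a\<in>space Ma.
        Q s a = r s a + \<gamma> * next_exp Ms p s a
          (\<lambda>s'. \<integral>a'. \<pi> s' a' * (Q s' a' - ln (\<pi> s' a')) \<partial>Ma))"

definition renyi_half :: "'a measure \<Rightarrow> ('a \<Rightarrow> real) \<Rightarrow> ('a \<Rightarrow> real) \<Rightarrow> real" where
  "renyi_half Ma P Q = - 2 * ln (\<integral>a. sqrt (P a * Q a) \<partial>Ma)"

text \<open>The maximum is rendered as a supremum over the action space; we require
s' |-> sup_{a'} C(s',a') to be measurable so that the expectation is meaningful.\<close>
definition C_fixed ::
  "'s measure \<Rightarrow> 'a measure \<Rightarrow> ('s \<Rightarrow> 'a \<Rightarrow> 's \<Rightarrow> real) \<Rightarrow> real \<Rightarrow>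
   ('s \<Rightarrow> 'a \<Rightarrow> real) \<Rightarrow> ('s \<Rightarrow> 'a \<Rightarrow> real) \<Rightarrow> ('s \<Rightarrow> 'a \<Rightarrow> real) \<Rightarrow> bool" where
  "C_fixed Ms Ma p \<gamma> Q1 Q2 C \<longleftrightarrow>
     bounded_measurable_SA Ms Ma C \<and>
     (\<lambda>s. SUP a\<in>space Ma. C s a) \<in> borel_measurable Ms \<and>
     (\<forall>s\<in>space Ms. \<forall>a\<in>space Ma.
        C s a = \<gamma> * next_exp Ms p s a
          (\<lambda>s'. renyi_half Ma (soft_policy Ma Q1 s') (soft_policy Ma Q2 s')
                + (SUP a'\<in>space Ma. C s' a')))"

definition D_fixed ::
  "'s measure \<Rightarrow> 'a measure \<Rightarrow> ('s \<Rightarrow> 'a \<Rightarrow> 's \<Rightarrow> real) \<Rightarrow> real \<Rightarrow>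
   ('s \<Rightarrow> 'a \<Rightarrow> real) \<Rightarrow> ('s \<Rightarrow> 'a \<Rightarrow> real) \<Rightarrow> ('s \<Rightarrow> 'a \<Rightarrow> real) \<Rightarrow> bool" where
  "D_fixed Ms Ma p \<gamma> \<pi> C D \<longleftrightarrow>
     bounded_measurable_SA Ms Ma D \<and>
     (\<forall>s\<in>space Ms. \<forall>a\<in>space Ma.
        D s a = \<gamma> * next_exp Ms p s a
          (\<lambda>s'. \<integral>a'. \<pi> s' a' * (C s' a' + D s' a') \<partial>Ma))"

end

theory Submission
  imports Defs
begin

(* Write QS = (Q1 + Q2) / 2, V Q s = ln (integral of exp (Q s a) da) for the soft value, and
   pi_Q for the Boltzmann policy of Q. The theorem chains three inequalities,
   QC <= QS <= QC + C and QC - D <= Q_pi. Each compares bounded solutions of two backup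
   equations: the difference h of the two sides satisfies h(s,a) = gamma * E_{s'}[g s'] with
   g >= inf h, hence inf h >= gamma * inf h, and inf h >= 0 because gamma < 1.
   The bounds on g come from monotonicity of V Q in Q, from 2 V QS <= V Q1 + V Q2 (Hoelder,
   here AM-GM), from D_{1/2}(pi_Q1 || pi_Q2) = V Q1 + V Q2 - 2 V QS, and from
   E_{pi_QS}[Q - ln pi_QS] = E_{pi_QS}[Q - QS] + V QS. *)

definition bounded_measurable_S :: "'s measure \<Rightarrow> ('s \<Rightarrow> real) \<Rightarrow> bool" where
  "bounded_measurable_S M g \<longleftrightarrow> g \<in> borel_measurable M \<and> (\<exists>B. \<forall>x\<in>space M. \<bar>g x\<bar> \<le> B)"

lemma bounded_measurable_S_add:
  "bounded_measurable_S M f \<Longrightarrow> bounded_measurable_S M g \<Longrightarrow> bounded_measurable_S M (\<lambda>x. f x + g x)"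
  unfolding bounded_measurable_S_def
  by (auto intro!: exI[of _ "_ + _"] abs_triangle_ineq[THEN order_trans] add_mono)

lemma bounded_measurable_S_diff:
  "bounded_measurable_S M f \<Longrightarrow> bounded_measurable_S M g \<Longrightarrow> bounded_measurable_S M (\<lambda>x. f x - g x)"
  unfolding bounded_measurable_S_def
  by (auto intro!: exI[of _ "_ + _"] abs_triangle_ineq4[THEN order_trans] add_mono)

lemma bounded_measurable_S_divide:
  "bounded_measurable_S M f \<Longrightarrow> bounded_measurable_S M (\<lambda>x. f x / c)"
  unfolding bounded_measurable_S_def
  by (auto intro!: exI[of _ "_ / \<bar>c\<bar>"] divide_right_mono simp: abs_divide)

lemma bounded_measurable_S_cong:
  "bounded_measurable_S M f \<Longrightarrow> (\<And>x. x \<in> space M \<Longrightarrow> f x = g x) \<Longrightarrow> bounded_measurable_S M g"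
  unfolding bounded_measurable_S_def by (metis measurable_cong)

lemma bounded_measurable_SA_bound:
  assumes "bounded_measurable_SA Ms Ma Q"
  obtains B where "\<And>s a. s \<in> space Ms \<Longrightarrow> a \<in> space Ma \<Longrightarrow> \<bar>Q s a\<bar> \<le> B"
  using assms unfolding bounded_measurable_SA_def by blast

lemma bounded_measurable_SA_section:
  "bounded_measurable_SA Ms Ma Q \<Longrightarrow> s \<in> space Ms \<Longrightarrow> Q s \<in> borel_measurable Ma"
  unfolding bounded_measurable_SA_def using measurable_Pair2[of "case_prod Q" Ms Ma borel s] by simp

lemma bounded_measurable_SA_iff:
  "bounded_measurable_SA Ms Ma f \<longleftrightarrow> bounded_measurable_S (Ms \<Otimes>\<^sub>M Ma) (case_prod f)"
  unfolding bounded_measurable_SA_def bounded_measurable_S_def by (auto simp: space_pair_measure)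

lemma bounded_measurable_SA_const: "bounded_measurable_SA Ms Ma (\<lambda>s a. c)"
  unfolding bounded_measurable_SA_def by auto

lemma bounded_measurable_SA_add:
  "bounded_measurable_SA Ms Ma f \<Longrightarrow> bounded_measurable_SA Ms Ma g \<Longrightarrow>
   bounded_measurable_SA Ms Ma (\<lambda>s a. f s a + g s a)"
  unfolding bounded_measurable_SA_iff by (drule (1) bounded_measurable_S_add) (simp add: case_prod_beta')

lemma bounded_measurable_SA_diff:
  "bounded_measurable_SA Ms Ma f \<Longrightarrow> bounded_measurable_SA Ms Ma g \<Longrightarrow>
   bounded_measurable_SA Ms Ma (\<lambda>s a. f s a - g s a)"
  unfolding bounded_measurable_SA_iff by (drule (1) bounded_measurable_S_diff) (simp add: case_prod_beta')

lemma bounded_measurable_SA_divide: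
  "bounded_measurable_SA Ms Ma f \<Longrightarrow> bounded_measurable_SA Ms Ma (\<lambda>s a. f s a / c)"
  unfolding bounded_measurable_SA_iff by (drule bounded_measurable_S_divide) (simp add: case_prod_beta')

lemma exp_midpoint_le: "2 * exp ((u + v) / 2) \<le> exp u + exp (v::real)"
proof -
  have "0 \<le> (exp (u / 2) - exp (v / 2))\<^sup>2" by simp
  also have "\<dots> = exp u + exp v - 2 * exp ((u + v) / 2)"
    by (simp add: power2_eq_square algebra_simps exp_add[symmetric] add_divide_distrib)
  finally show ?thesis by simp
qed

lemma nonneg_if_lower_bounds_contract:
  fixes f :: "'x \<Rightarrow> real"
  assumes bdd: "bdd_below (f ` X)" and \<gamma>: "\<gamma> < 1"
    and contract: "\<And>m. \<forall>y\<in>X. m \<le> f y \<Longrightarrow> \<forall>y\<in>X. \<gamma> * m \<le> f y"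
    and x: "x \<in> X"
  shows "0 \<le> f x"
proof -
  let ?m = "INF y\<in>X. f y"
  have low: "\<forall>y\<in>X. ?m \<le> f y"
    using bdd by (auto intro: cINF_lower)
  have "\<gamma> * ?m \<le> ?m"
    using contract[OF low] x by (auto intro: cINF_greatest)
  then have "0 \<le> (1 - \<gamma>) * ?m" by (simp add: algebra_simps)
  with \<gamma> have "0 \<le> ?m" by (simp add: zero_le_mult_iff)
  with low x show ?thesis by fastforce
qed

lemma next_exp_cong:
  "(\<And>x. x \<in> space Ms \<Longrightarrow> f x = g x) \<Longrightarrow> next_exp Ms p s a f = next_exp Ms p s a g"
  unfolding next_exp_def by (rule Bochner_Integration.integral_cong) auto

lemma next_exp_divide: "next_exp Ms p s a (\<lambda>x. f x / c) = next_exp Ms p s a f / c"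
  unfolding next_exp_def times_divide_eq_right by (rule integral_divide_zero)

lemma le_SUP_action:
  assumes "bounded_measurable_SA Ms Ma C" "s \<in> space Ms" "a \<in> space Ma"
  shows "C s a \<le> (SUP a\<in>space Ma. C s a)"
proof -
  obtain B where "\<And>s a. s \<in> space Ms \<Longrightarrow> a \<in> space Ma \<Longrightarrow> \<bar>C s a\<bar> \<le> B"
    using bounded_measurable_SA_bound[OF assms(1)] by metis
  with assms(2) have "bdd_above (C s ` space Ma)"
    by (intro bdd_aboveI[of _ B]) (auto simp: abs_le_iff)
  with assms(3) show ?thesis by (rule cSUP_upper)
qed

locale mdp =
  fixes Ms :: "'s measure" and Ma :: "'a measure" and p :: "'s \<Rightarrow> 'a \<Rightarrow> 's \<Rightarrow> real"
    and \<gamma> :: real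
  assumes soft_mdp: "soft_mdp Ms Ma p \<gamma>"
begin

lemma finite_measure_Ma: "finite_measure Ma"
  and measure_Ma_pos: "0 < measure Ma (space Ma)"
  and gamma_pos: "0 < \<gamma>" and gamma_less_1: "\<gamma> < 1"
  and p_measurable: "\<And>s a. s \<in> space Ms \<Longrightarrow> a \<in> space Ma \<Longrightarrow> p s a \<in> borel_measurable Ms"
  and p_nonneg: "\<And>s a s'. s \<in> space Ms \<Longrightarrow> a \<in> space Ma \<Longrightarrow> s' \<in> space Ms \<Longrightarrow> 0 \<le> p s a s'"
  and integral_p: "\<And>s a. s \<in> space Ms \<Longrightarrow> a \<in> space Ma \<Longrightarrow> (\<integral>s'. p s a s' \<partial>Ms) = 1"
  using soft_mdp measurable_Pair2[of "\<lambda>((s, a), s'). p s a s'" "Ms \<Otimes>\<^sub>M Ma" Ms borel]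
  unfolding soft_mdp_def
  by (auto intro: finite_measureI simp: measure_def enn2real_positive_iff space_pair_measure)

sublocale Ma: finite_measure Ma
  by (rule finite_measure_Ma)

lemma space_Ma_nonempty: "space Ma \<noteq> {}"
  using measure_Ma_pos by auto

lemma integrable_p: "s \<in> space Ms \<Longrightarrow> a \<in> space Ma \<Longrightarrow> integrable Ms (p s a)"
  using integral_p not_integrable_integral_eq by fastforce

lemma integrable_p_mult:
  assumes g: "bounded_measurable_S Ms g" and s: "s \<in> space Ms" and a: "a \<in> space Ma"
  shows "integrable Ms (\<lambda>x. p s a x * g x)"
proof -
  obtain B where B: "\<And>x. x \<in> space Ms \<Longrightarrow> \<bar>g x\<bar> \<le> B"
    using g unfolding bounded_measurable_S_def by blast
  show ?thesis
  proof (rule Bochner_Integration.integrable_bound[of _ "\<lambda>x. B * p s a x"])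
    show "integrable Ms (\<lambda>x. B * p s a x)" using integrable_p[OF s a] by simp
    show "(\<lambda>x. p s a x * g x) \<in> borel_measurable Ms"
      using p_measurable[OF s a] g unfolding bounded_measurable_S_def by (auto intro: borel_measurable_times)
    show "AE x in Ms. norm (p s a x * g x) \<le> norm (B * p s a x)"
    proof (rule AE_I2)
      fix x assume x: "x \<in> space Ms"
      have "\<bar>g x\<bar> \<le> \<bar>B\<bar>" using B[OF x] by linarith
      with p_nonneg[OF s a x] show "norm (p s a x * g x) \<le> norm (B * p s a x)"
        by (simp add: abs_mult mult_right_mono mult.commute[of "p s a x"])
    qed
  qed
qed

lemma next_exp_ge:
  assumes g: "bounded_measurable_S Ms g" and s: "s \<in> space Ms" and a: "a \<in> space Ma"
    and ge: "\<And>x. x \<in> space Ms \<Longrightarrow> m \<le> g x"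
  shows "m \<le> next_exp Ms p s a g"
proof -
  have "m = (\<integral>x. p s a x * m \<partial>Ms)" using integral_p[OF s a] by simp
  also have "\<dots> \<le> next_exp Ms p s a g"
    unfolding next_exp_def using integrable_p[OF s a] integrable_p_mult[OF g s a] ge p_nonneg[OF s a]
    by (intro integral_mono) (auto intro: mult_left_mono)
  finally show ?thesis .
qed

lemma next_exp_add:
  "bounded_measurable_S Ms f \<Longrightarrow> bounded_measurable_S Ms g \<Longrightarrow> s \<in> space Ms \<Longrightarrow> a \<in> space Ma \<Longrightarrow>
   next_exp Ms p s a (\<lambda>x. f x + g x) = next_exp Ms p s a f + next_exp Ms p s a g"
  unfolding next_exp_def distrib_left
  by (rule Bochner_Integration.integral_add) (auto intro: integrable_p_mult)

lemma next_exp_diff: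
  "bounded_measurable_S Ms f \<Longrightarrow> bounded_measurable_S Ms g \<Longrightarrow> s \<in> space Ms \<Longrightarrow> a \<in> space Ma \<Longrightarrow>
   next_exp Ms p s a (\<lambda>x. f x - g x) = next_exp Ms p s a f - next_exp Ms p s a g"
  unfolding next_exp_def right_diff_distrib
  by (rule Bochner_Integration.integral_diff) (auto intro: integrable_p_mult)

lemma nonneg_by_comparison:
  assumes h: "bounded_measurable_SA Ms Ma h" and g: "bounded_measurable_S Ms g"
    and backup: "\<And>s a. s \<in> space Ms \<Longrightarrow> a \<in> space Ma \<Longrightarrow> h s a = \<gamma> * next_exp Ms p s a g"
    and lower: "\<And>m x. \<forall>s\<in>space Ms. \<forall>a\<in>space Ma. m \<le> h s a \<Longrightarrow> x \<in> space Ms \<Longrightarrow> m \<le> g x"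
    and s: "s \<in> space Ms" and a: "a \<in> space Ma"
  shows "0 \<le> h s a"
proof -
  obtain B where B: "\<And>s a. s \<in> space Ms \<Longrightarrow> a \<in> space Ma \<Longrightarrow> \<bar>h s a\<bar> \<le> B"
    using bounded_measurable_SA_bound[OF h] by metis
  have "0 \<le> case_prod h (s, a)"
  proof (rule nonneg_if_lower_bounds_contract[where f = "case_prod h" and X = "space Ms \<times> space Ma",
        OF _ gamma_less_1])
    show "bdd_below (case_prod h ` (space Ms \<times> space Ma))"
      using B by (intro bdd_belowI[of _ "- B"]) (force simp: abs_le_iff)
  next
    fix m assume "\<forall>y\<in>space Ms \<times> space Ma. m \<le> case_prod h y"
    then have hm: "\<forall>s\<in>space Ms. \<forall>a\<in>space Ma. m \<le> h s a" by auto
    show "\<forall>y\<in>space Ms \<times> space Ma. \<gamma> * m \<le> case_prod h y"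
    proof safe
      fix s a assume s: "s \<in> space Ms" and a: "a \<in> space Ma"
      have "m \<le> next_exp Ms p s a g" by (rule next_exp_ge[OF g s a lower[OF hm]])
      then show "\<gamma> * m \<le> h s a" using backup[OF s a] gamma_pos by (simp add: mult_left_mono)
    qed
  qed (use s a in simp)
  then show ?thesis by simp
qed

lemma integrable_exp_mult:
  assumes Q: "bounded_measurable_SA Ms Ma Q" and h: "bounded_measurable_SA Ms Ma h"
    and s: "s \<in> space Ms"
  shows "integrable Ma (\<lambda>a. exp (Q s a) * h s a)"
proof -
  obtain BQ where BQ: "\<And>s a. s \<in> space Ms \<Longrightarrow> a \<in> space Ma \<Longrightarrow> \<bar>Q s a\<bar> \<le> BQ"
    using bounded_measurable_SA_bound[OF Q] by metis
  obtain Bh where Bh: "\<And>s a. s \<in> space Ms \<Longrightarrow> a \<in> space Ma \<Longrightarrow> \<bar>h s a\<bar> \<le> Bh"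
    using bounded_measurable_SA_bound[OF h] by metis
  have [measurable]: "Q s \<in> borel_measurable Ma" "h s \<in> borel_measurable Ma"
    using bounded_measurable_SA_section[OF Q s] bounded_measurable_SA_section[OF h s] by auto
  show ?thesis
  proof (rule Ma.integrable_const_bound[of _ "exp BQ * Bh"])
    show "AE a in Ma. norm (exp (Q s a) * h s a) \<le> exp BQ * Bh"
    proof (rule AE_I2)
      fix a assume a: "a \<in> space Ma"
      have "exp (Q s a) \<le> exp BQ" using BQ[OF s a] by (simp add: abs_le_iff)
      with Bh[OF s a] show "norm (exp (Q s a) * h s a) \<le> exp BQ * Bh"
        by (simp add: abs_mult mult_mono)
    qed
  qed measurable
qed

lemma integrable_exp:
  "bounded_measurable_SA Ms Ma Q \<Longrightarrow> s \<in> space Ms \<Longrightarrow> integrable Ma (\<lambda>a. exp (Q s a))"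
  using integrable_exp_mult[OF _ bounded_measurable_SA_const, of Q s 1] by simp

lemma measurable_integral_exp_mult:
  assumes Q: "bounded_measurable_SA Ms Ma Q" and h: "case_prod h \<in> borel_measurable (Ms \<Otimes>\<^sub>M Ma)"
  shows "(\<lambda>s. \<integral>a. exp (Q s a) * h s a \<partial>Ma) \<in> borel_measurable Ms"
proof -
  have [measurable]: "case_prod Q \<in> borel_measurable (Ms \<Otimes>\<^sub>M Ma)" "case_prod h \<in> borel_measurable (Ms \<Otimes>\<^sub>M Ma)"
    using Q h unfolding bounded_measurable_SA_def by auto
  have "(\<lambda>x. exp (case_prod Q x) * case_prod h x) \<in> borel_measurable (Ms \<Otimes>\<^sub>M Ma)" by measurable
  then show ?thesis
    by (intro Ma.borel_measurable_lebesgue_integral) (simp add: case_prod_beta')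
qed

lemma partition_pos:
  assumes Q: "bounded_measurable_SA Ms Ma Q" and s: "s \<in> space Ms"
  shows "0 < (\<integral>a. exp (Q s a) \<partial>Ma)"
proof -
  obtain B where B: "\<And>s a. s \<in> space Ms \<Longrightarrow> a \<in> space Ma \<Longrightarrow> \<bar>Q s a\<bar> \<le> B"
    using bounded_measurable_SA_bound[OF Q] by metis
  have "0 < measure Ma (space Ma) * exp (- B)" using measure_Ma_pos by simp
  also have "\<dots> = (\<integral>a. exp (- B) \<partial>Ma)" by simp
  also have "\<dots> \<le> (\<integral>a. exp (Q s a) \<partial>Ma)"
  proof (rule integral_mono[OF _ integrable_exp[OF Q s]])
    fix a assume "a \<in> space Ma"
    with B[OF s] have "\<bar>Q s a\<bar> \<le> B" by blast
    then have "- B \<le> Q s a" by linarith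
    then show "exp (- B) \<le> exp (Q s a)" by simp
  qed (rule Ma.integrable_const)
  finally show ?thesis .
qed

lemma soft_value_const: "soft_value Ma (\<lambda>s a. c) s = c + ln (measure Ma (space Ma))"
  unfolding soft_value_def using measure_Ma_pos by (simp add: ln_mult)

lemma soft_value_mono:
  assumes Q: "bounded_measurable_SA Ms Ma Q" and Q': "bounded_measurable_SA Ms Ma Q'"
    and s: "s \<in> space Ms" and le: "\<And>a. a \<in> space Ma \<Longrightarrow> Q s a + m \<le> Q' s a"
  shows "soft_value Ma Q s + m \<le> soft_value Ma Q' s"
proof -
  have "exp m * (\<integral>a. exp (Q s a) \<partial>Ma) = (\<integral>a. exp (Q s a + m) \<partial>Ma)"
    by (simp add: exp_add mult.commute)
  also have "\<dots> \<le> (\<integral>a. exp (Q' s a) \<partial>Ma)"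
  proof (rule integral_mono[OF _ integrable_exp[OF Q' s]])
    show "integrable Ma (\<lambda>a. exp (Q s a + m))"
      using integrable_exp[OF Q s] by (simp add: exp_add)
  qed (use le in simp)
  finally have "ln (exp m * (\<integral>a. exp (Q s a) \<partial>Ma)) \<le> ln (\<integral>a. exp (Q' s a) \<partial>Ma)"
    using partition_pos[OF Q s] partition_pos[OF Q' s] by (subst ln_le_cancel_iff) auto
  then show ?thesis
    unfolding soft_value_def using partition_pos[OF Q s] by (simp add: ln_mult)
qed

lemma soft_value_bounded_measurable:
  assumes Q: "bounded_measurable_SA Ms Ma Q"
  shows "bounded_measurable_S Ms (soft_value Ma Q)"
  unfolding bounded_measurable_S_def
proof
  have [measurable]: "(\<lambda>s. \<integral>a. exp (Q s a) \<partial>Ma) \<in> borel_measurable Ms"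
    using measurable_integral_exp_mult[OF Q, of "\<lambda>_ _. 1"] by simp
  show "soft_value Ma Q \<in> borel_measurable Ms"
    unfolding soft_value_def[abs_def] by measurable
  obtain B where B: "\<And>s a. s \<in> space Ms \<Longrightarrow> a \<in> space Ma \<Longrightarrow> \<bar>Q s a\<bar> \<le> B"
    using bounded_measurable_SA_bound[OF Q] by metis
  have "\<bar>soft_value Ma Q s - ln (measure Ma (space Ma))\<bar> \<le> B" if s: "s \<in> space Ms" for s
  proof -
    have "soft_value Ma (\<lambda>s a. - B) s + 0 \<le> soft_value Ma Q s"
      by (rule soft_value_mono[OF bounded_measurable_SA_const Q s]) (use B[OF s] in force)
    moreover have "soft_value Ma Q s + 0 \<le> soft_value Ma (\<lambda>s a. B) s"
      by (rule soft_value_mono[OF Q bounded_measurable_SA_const s]) (use B[OF s] in force)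
    ultimately show ?thesis by (simp add: soft_value_const)
  qed
  then show "\<exists>B. \<forall>s\<in>space Ms. \<bar>soft_value Ma Q s\<bar> \<le> B"
    by (intro exI[of _ "B + \<bar>ln (measure Ma (space Ma))\<bar>"]) (force simp: abs_le_iff)
qed

lemma soft_policy_nonneg: "0 \<le> soft_policy Ma Q s a"
  unfolding soft_policy_def by (simp add: Bochner_Integration.integral_nonneg)

lemma integral_soft_policy_mult:
  "(\<integral>a. soft_policy Ma Q s a * h a \<partial>Ma) = (\<integral>a. exp (Q s a) * h a \<partial>Ma) / (\<integral>a. exp (Q s a) \<partial>Ma)"
  unfolding soft_policy_def by simp

lemma integrable_soft_policy_mult:
  "bounded_measurable_SA Ms Ma Q \<Longrightarrow> bounded_measurable_SA Ms Ma h \<Longrightarrow> s \<in> space Ms \<Longrightarrow>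
   integrable Ma (\<lambda>a. soft_policy Ma Q s a * h s a)"
  using integrable_divide_zero[OF integrable_exp_mult] unfolding soft_policy_def by simp

lemma integral_soft_policy:
  "bounded_measurable_SA Ms Ma Q \<Longrightarrow> s \<in> space Ms \<Longrightarrow> (\<integral>a. soft_policy Ma Q s a \<partial>Ma) = 1"
  using integral_soft_policy_mult[of Q s "\<lambda>_. 1"] partition_pos[of Q s] by simp

lemma integral_soft_policy_mono:
  assumes Q: "bounded_measurable_SA Ms Ma Q" and f: "bounded_measurable_SA Ms Ma f"
    and g: "bounded_measurable_SA Ms Ma g" and s: "s \<in> space Ms"
    and le: "\<And>a. a \<in> space Ma \<Longrightarrow> f s a \<le> g s a"
  shows "(\<integral>a. soft_policy Ma Q s a * f s a \<partial>Ma) \<le> (\<integral>a. soft_policy Ma Q s a * g s a \<partial>Ma)"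
  using integrable_soft_policy_mult[OF Q f s] integrable_soft_policy_mult[OF Q g s] le
  by (intro integral_mono) (auto intro: mult_left_mono soft_policy_nonneg)

lemma integral_soft_policy_add:
  assumes Q: "bounded_measurable_SA Ms Ma Q" and f: "bounded_measurable_SA Ms Ma f"
    and g: "bounded_measurable_SA Ms Ma g" and s: "s \<in> space Ms"
  shows "(\<integral>a. soft_policy Ma Q s a * (f s a + g s a) \<partial>Ma) =
    (\<integral>a. soft_policy Ma Q s a * f s a \<partial>Ma) + (\<integral>a. soft_policy Ma Q s a * g s a \<partial>Ma)"
  unfolding distrib_left
  using integrable_soft_policy_mult[OF Q f s] integrable_soft_policy_mult[OF Q g s]
  by (rule Bochner_Integration.integral_add)

lemma soft_policy_average_bounded_measurable:
  assumes Q: "bounded_measurable_SA Ms Ma Q" and h: "bounded_measurable_SA Ms Ma h"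
  shows "bounded_measurable_S Ms (\<lambda>s. \<integral>a. soft_policy Ma Q s a * h s a \<partial>Ma)"
  unfolding bounded_measurable_S_def
proof
  have [measurable]: "(\<lambda>s. \<integral>a. exp (Q s a) * h s a \<partial>Ma) \<in> borel_measurable Ms"
    "(\<lambda>s. \<integral>a. exp (Q s a) \<partial>Ma) \<in> borel_measurable Ms"
    using measurable_integral_exp_mult[OF Q] h measurable_integral_exp_mult[OF Q, of "\<lambda>_ _. 1"]
    unfolding bounded_measurable_SA_def by auto
  show "(\<lambda>s. \<integral>a. soft_policy Ma Q s a * h s a \<partial>Ma) \<in> borel_measurable Ms"
    unfolding integral_soft_policy_mult by measurable
  obtain B where B: "\<And>s a. s \<in> space Ms \<Longrightarrow> a \<in> space Ma \<Longrightarrow> \<bar>h s a\<bar> \<le> B"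
    using bounded_measurable_SA_bound[OF h] by metis
  have "\<bar>\<integral>a. soft_policy Ma Q s a * h s a \<partial>Ma\<bar> \<le> B" if s: "s \<in> space Ms" for s
  proof -
    have "(\<integral>a. soft_policy Ma Q s a * - B \<partial>Ma) \<le> (\<integral>a. soft_policy Ma Q s a * h s a \<partial>Ma)"
      by (rule integral_soft_policy_mono[OF Q bounded_measurable_SA_const h s]) (use B[OF s] in force)
    moreover have "(\<integral>a. soft_policy Ma Q s a * h s a \<partial>Ma) \<le> (\<integral>a. soft_policy Ma Q s a * B \<partial>Ma)"
      by (rule integral_soft_policy_mono[OF Q h bounded_measurable_SA_const s]) (use B[OF s] in force)
    ultimately show ?thesis by (simp add: integral_soft_policy[OF Q s])
  qed
  then show "\<exists>B. \<forall>s\<in>space Ms. \<bar>\<integral>a. soft_policy Ma Q s a * h s a \<partial>Ma\<bar> \<le> B" by blast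
qed

lemma ln_soft_policy:
  "bounded_measurable_SA Ms Ma Q \<Longrightarrow> s \<in> space Ms \<Longrightarrow>
   ln (soft_policy Ma Q s a) = Q s a - soft_value Ma Q s"
  unfolding soft_policy_def soft_value_def using partition_pos[of Q s] by (simp add: ln_divide_pos)

lemma integral_soft_policy_minus_ln:
  assumes Q: "bounded_measurable_SA Ms Ma Q" and h: "bounded_measurable_SA Ms Ma h"
    and s: "s \<in> space Ms"
  shows "(\<integral>a. soft_policy Ma Q s a * (h s a - ln (soft_policy Ma Q s a)) \<partial>Ma) =
    (\<integral>a. soft_policy Ma Q s a * (h s a - Q s a) \<partial>Ma) + soft_value Ma Q s"
proof -
  have "(\<integral>a. soft_policy Ma Q s a * (h s a - ln (soft_policy Ma Q s a)) \<partial>Ma) =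
    (\<integral>a. soft_policy Ma Q s a * (h s a - Q s a) + soft_policy Ma Q s a * soft_value Ma Q s \<partial>Ma)"
    by (simp add: ln_soft_policy[OF Q s] algebra_simps)
  also have "\<dots> = (\<integral>a. soft_policy Ma Q s a * (h s a - Q s a) \<partial>Ma) + soft_value Ma Q s"
    using integrable_soft_policy_mult[OF Q bounded_measurable_SA_diff[OF h Q] s]
      integrable_soft_policy_mult[OF Q bounded_measurable_SA_const s]
    by (simp add: integral_soft_policy[OF Q s])
  finally show ?thesis .
qed

lemma soft_value_midpoint_le:
  assumes Q1: "bounded_measurable_SA Ms Ma Q1" and Q2: "bounded_measurable_SA Ms Ma Q2"
    and s: "s \<in> space Ms"
  shows "2 * soft_value Ma (\<lambda>s a. (Q1 s a + Q2 s a) / 2) s \<le> soft_value Ma Q1 s + soft_value Ma Q2 s"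
proof -
  define Z1 where "Z1 = (\<integral>a. exp (Q1 s a) \<partial>Ma)"
  define Z2 where "Z2 = (\<integral>a. exp (Q2 s a) \<partial>Ma)"
  define ZS where "ZS = (\<integral>a. exp ((Q1 s a + Q2 s a) / 2) \<partial>Ma)"
  have Z1: "0 < Z1" and Z2: "0 < Z2" and ZS: "0 < ZS"
    unfolding Z1_def Z2_def ZS_def
    using partition_pos[OF Q1 s] partition_pos[OF Q2 s]
      partition_pos[OF bounded_measurable_SA_divide[OF bounded_measurable_SA_add[OF Q1 Q2]] s]
    by auto
  define c where "c = (ln Z2 - ln Z1) / 2"
  \<comment> \<open>balances the AM-GM bound: exp c * Z1 = exp (- c) * Z2 = sqrt (Z1 * Z2)\<close>
  have "2 * ZS = (\<integral>a. 2 * exp (((c + Q1 s a) + (Q2 s a - c)) / 2) \<partial>Ma)"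
    unfolding ZS_def by simp
  also have "\<dots> \<le> (\<integral>a. exp c * exp (Q1 s a) + exp (- c) * exp (Q2 s a) \<partial>Ma)"
  proof (rule integral_mono)
    show "integrable Ma (\<lambda>a. exp c * exp (Q1 s a) + exp (- c) * exp (Q2 s a))"
      using integrable_exp[OF Q1 s] integrable_exp[OF Q2 s] by simp
    show "integrable Ma (\<lambda>a. 2 * exp (((c + Q1 s a) + (Q2 s a - c)) / 2))"
      using integrable_exp[OF bounded_measurable_SA_divide[OF bounded_measurable_SA_add[OF Q1 Q2]] s]
      by simp
    show "2 * exp (((c + Q1 s a) + (Q2 s a - c)) / 2) \<le> exp c * exp (Q1 s a) + exp (- c) * exp (Q2 s a)"
      for a using exp_midpoint_le[of "c + Q1 s a" "Q2 s a - c"] by (simp add: exp_add exp_diff exp_minus field_simps)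
  qed
  also have "\<dots> = exp c * Z1 + exp (- c) * Z2"
    unfolding Z1_def Z2_def using integrable_exp[OF Q1 s] integrable_exp[OF Q2 s] by simp
  also have "\<dots> = exp (c + ln Z1) + exp (- c + ln Z2)"
    using Z1 Z2 by (simp add: exp_add exp_diff exp_minus field_simps)
  also have "\<dots> = 2 * exp ((ln Z1 + ln Z2) / 2)"
    by (simp add: c_def field_simps)
  finally have "ZS \<le> exp ((ln Z1 + ln Z2) / 2)" by simp
  then have "ln ZS \<le> (ln Z1 + ln Z2) / 2"
    using ZS by (metis exp_gt_zero ln_exp ln_le_cancel_iff)
  then show ?thesis
    unfolding soft_value_def Z1_def Z2_def ZS_def by simp
qed

lemma renyi_half_soft_policy:
  assumes Q1: "bounded_measurable_SA Ms Ma Q1" and Q2: "bounded_measurable_SA Ms Ma Q2"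
    and s: "s \<in> space Ms"
  shows "renyi_half Ma (soft_policy Ma Q1 s) (soft_policy Ma Q2 s) =
    soft_value Ma Q1 s + soft_value Ma Q2 s - 2 * soft_value Ma (\<lambda>s a. (Q1 s a + Q2 s a) / 2) s"
proof -
  define Z1 where "Z1 = (\<integral>a. exp (Q1 s a) \<partial>Ma)"
  define Z2 where "Z2 = (\<integral>a. exp (Q2 s a) \<partial>Ma)"
  define ZS where "ZS = (\<integral>a. exp ((Q1 s a + Q2 s a) / 2) \<partial>Ma)"
  have Z1: "0 < Z1" and Z2: "0 < Z2" and ZS: "0 < ZS"
    unfolding Z1_def Z2_def ZS_def
    using partition_pos[OF Q1 s] partition_pos[OF Q2 s]
      partition_pos[OF bounded_measurable_SA_divide[OF bounded_measurable_SA_add[OF Q1 Q2]] s]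
    by auto
  have "sqrt (soft_policy Ma Q1 s a * soft_policy Ma Q2 s a) = exp ((Q1 s a + Q2 s a) / 2) / sqrt (Z1 * Z2)"
    for a
  proof -
    have "exp (Q1 s a) * exp (Q2 s a) = exp ((Q1 s a + Q2 s a) / 2) ^ 2"
      by (simp add: exp_add[symmetric] power2_eq_square)
    then show ?thesis
      unfolding soft_policy_def Z1_def[symmetric] Z2_def[symmetric]
      by (simp add: real_sqrt_divide real_sqrt_mult[symmetric])
  qed
  then have "(\<integral>a. sqrt (soft_policy Ma Q1 s a * soft_policy Ma Q2 s a) \<partial>Ma) = ZS / sqrt (Z1 * Z2)"
    unfolding ZS_def by simp
  then show ?thesis
    unfolding renyi_half_def soft_value_def Z1_def[symmetric] Z2_def[symmetric] ZS_def[symmetric]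
    using Z1 Z2 ZS by (simp add: ln_divide_pos ln_sqrt ln_mult)
qed

lemma renyi_half_soft_policy_bounded_measurable:
  assumes Q1: "bounded_measurable_SA Ms Ma Q1" and Q2: "bounded_measurable_SA Ms Ma Q2"
  shows "bounded_measurable_S Ms (\<lambda>s. renyi_half Ma (soft_policy Ma Q1 s) (soft_policy Ma Q2 s))"
proof (rule bounded_measurable_S_cong)
  have "bounded_measurable_SA Ms Ma (\<lambda>s a. (Q1 s a + Q2 s a) / 2)"
    by (intro bounded_measurable_SA_divide bounded_measurable_SA_add Q1 Q2)
  then show "bounded_measurable_S Ms (\<lambda>s. (soft_value Ma Q1 s - soft_value Ma (\<lambda>s a. (Q1 s a + Q2 s a) / 2) s)
      + (soft_value Ma Q2 s - soft_value Ma (\<lambda>s a. (Q1 s a + Q2 s a) / 2) s))"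
    using Q1 Q2 by (intro bounded_measurable_S_add bounded_measurable_S_diff soft_value_bounded_measurable)
qed (simp add: renyi_half_soft_policy[OF Q1 Q2])

lemma SUP_action_bounded_measurable:
  assumes C: "bounded_measurable_SA Ms Ma C"
    and meas: "(\<lambda>s. SUP a\<in>space Ma. C s a) \<in> borel_measurable Ms"
  shows "bounded_measurable_S Ms (\<lambda>s. SUP a\<in>space Ma. C s a)"
proof -
  obtain B where B: "\<And>s a. s \<in> space Ms \<Longrightarrow> a \<in> space Ma \<Longrightarrow> \<bar>C s a\<bar> \<le> B"
    using bounded_measurable_SA_bound[OF C] by metis
  obtain a0 where a0: "a0 \<in> space Ma" using space_Ma_nonempty by blast
  have "\<bar>SUP a\<in>space Ma. C s a\<bar> \<le> B" if s: "s \<in> space Ms" for s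
  proof -
    have "C s a0 \<le> (SUP a\<in>space Ma. C s a)" by (rule le_SUP_action[OF C s a0])
    moreover have "(SUP a\<in>space Ma. C s a) \<le> B"
      using B[OF s] by (intro cSUP_least[OF space_Ma_nonempty]) (simp add: abs_le_iff)
    ultimately show ?thesis using B[OF s a0] by linarith
  qed
  with meas show ?thesis unfolding bounded_measurable_S_def by blast
qed

lemma optimal_soft_Q_avg_reward_le:
  assumes Q1: "optimal_soft_Q Ms Ma p \<gamma> r1 Q1" and Q2: "optimal_soft_Q Ms Ma p \<gamma> r2 Q2"
    and QC: "optimal_soft_Q Ms Ma p \<gamma> (\<lambda>s a. (r1 s a + r2 s a) / 2) QC"
    and s: "s \<in> space Ms" and a: "a \<in> space Ma"
  shows "QC s a \<le> (Q1 s a + Q2 s a) / 2"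
proof -
  define QS where "QS = (\<lambda>s a. (Q1 s a + Q2 s a) / 2)"
  have bQ1: "bounded_measurable_SA Ms Ma Q1" and bQ2: "bounded_measurable_SA Ms Ma Q2"
    and bQC: "bounded_measurable_SA Ms Ma QC"
    using Q1 Q2 QC unfolding optimal_soft_Q_def by blast+
  have bQS: "bounded_measurable_SA Ms Ma QS"
    unfolding QS_def by (intro bounded_measurable_SA_divide bounded_measurable_SA_add bQ1 bQ2)
  note V = soft_value_bounded_measurable[OF bQ1] soft_value_bounded_measurable[OF bQ2]
    soft_value_bounded_measurable[OF bQC]
  have "0 \<le> QS s a - QC s a"
  proof (rule nonneg_by_comparison[OF bounded_measurable_SA_diff[OF bQS bQC]])
    show "bounded_measurable_S Ms (\<lambda>x. (soft_value Ma Q1 x + soft_value Ma Q2 x) / 2 - soft_value Ma QC x)"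
      using V by (intro bounded_measurable_S_diff bounded_measurable_S_divide bounded_measurable_S_add)
  next
    fix s a assume s: "s \<in> space Ms" and a: "a \<in> space Ma"
    have lin: "next_exp Ms p s a (\<lambda>x. (soft_value Ma Q1 x + soft_value Ma Q2 x) / 2 - soft_value Ma QC x) =
      (next_exp Ms p s a (soft_value Ma Q1) + next_exp Ms p s a (soft_value Ma Q2)) / 2
        - next_exp Ms p s a (soft_value Ma QC)"
      using V s a by (simp add: next_exp_diff next_exp_add next_exp_divide bounded_measurable_S_add
          bounded_measurable_S_divide)
    show "QS s a - QC s a =
      \<gamma> * next_exp Ms p s a (\<lambda>x. (soft_value Ma Q1 x + soft_value Ma Q2 x) / 2 - soft_value Ma QC x)"
      unfolding lin using Q1 Q2 QC s a unfolding optimal_soft_Q_def QS_def by (simp add: field_simps)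
  next
    fix m x assume hm: "\<forall>s\<in>space Ms. \<forall>a\<in>space Ma. m \<le> QS s a - QC s a" and x: "x \<in> space Ms"
    have "soft_value Ma QC x + m \<le> soft_value Ma QS x"
      by (rule soft_value_mono[OF bQC bQS x]) (use hm x in force)
    moreover have "2 * soft_value Ma QS x \<le> soft_value Ma Q1 x + soft_value Ma Q2 x"
      unfolding QS_def by (rule soft_value_midpoint_le[OF bQ1 bQ2 x])
    ultimately show "m \<le> (soft_value Ma Q1 x + soft_value Ma Q2 x) / 2 - soft_value Ma QC x"
      by (simp add: field_simps)
  qed (use s a in auto)
  then show ?thesis by (simp add: QS_def)
qed

lemma avg_optimal_soft_Q_le_add_C_fixed:
  assumes Q1: "optimal_soft_Q Ms Ma p \<gamma> r1 Q1" and Q2: "optimal_soft_Q Ms Ma p \<gamma> r2 Q2"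
    and QC: "optimal_soft_Q Ms Ma p \<gamma> (\<lambda>s a. (r1 s a + r2 s a) / 2) QC"
    and C: "C_fixed Ms Ma p \<gamma> Q1 Q2 C"
    and s: "s \<in> space Ms" and a: "a \<in> space Ma"
  shows "(Q1 s a + Q2 s a) / 2 \<le> QC s a + C s a"
proof -
  define QS where "QS = (\<lambda>s a. (Q1 s a + Q2 s a) / 2)"
  define R where "R = (\<lambda>s. renyi_half Ma (soft_policy Ma Q1 s) (soft_policy Ma Q2 s))"
  define SC where "SC = (\<lambda>s. SUP a\<in>space Ma. C s a)"
  have bQ1: "bounded_measurable_SA Ms Ma Q1" and bQ2: "bounded_measurable_SA Ms Ma Q2"
    and bQC: "bounded_measurable_SA Ms Ma QC"
    using Q1 Q2 QC unfolding optimal_soft_Q_def by blast+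
  have bQS: "bounded_measurable_SA Ms Ma QS"
    unfolding QS_def by (intro bounded_measurable_SA_divide bounded_measurable_SA_add bQ1 bQ2)
  have bC: "bounded_measurable_SA Ms Ma C" and bSC: "bounded_measurable_S Ms SC"
    using C SUP_action_bounded_measurable unfolding C_fixed_def SC_def by blast+
  have bR: "bounded_measurable_S Ms R"
    unfolding R_def by (rule renyi_half_soft_policy_bounded_measurable[OF bQ1 bQ2])
  note V = soft_value_bounded_measurable[OF bQ1] soft_value_bounded_measurable[OF bQ2]
    soft_value_bounded_measurable[OF bQC]
  let ?g = "\<lambda>x. (soft_value Ma QC x - (soft_value Ma Q1 x + soft_value Ma Q2 x) / 2) + (R x + SC x)"
  have "0 \<le> QC s a - QS s a + C s a"
  proof (rule nonneg_by_comparison[OF bounded_measurable_SA_add[OF bounded_measurable_SA_diff[OF bQC bQS] bC]])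
    show "bounded_measurable_S Ms ?g"
      using V bR bSC by (intro bounded_measurable_S_add bounded_measurable_S_diff bounded_measurable_S_divide)
  next
    fix s a assume s: "s \<in> space Ms" and a: "a \<in> space Ma"
    have lin: "next_exp Ms p s a ?g =
      (next_exp Ms p s a (soft_value Ma QC)
        - (next_exp Ms p s a (soft_value Ma Q1) + next_exp Ms p s a (soft_value Ma Q2)) / 2)
      + next_exp Ms p s a (\<lambda>x. R x + SC x)"
      using V bR bSC s a by (simp add: next_exp_diff next_exp_add next_exp_divide bounded_measurable_S_add
          bounded_measurable_S_diff bounded_measurable_S_divide)
    have "Q1 s a = r1 s a + \<gamma> * next_exp Ms p s a (soft_value Ma Q1)"
      and "Q2 s a = r2 s a + \<gamma> * next_exp Ms p s a (soft_value Ma Q2)"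
      and "QC s a = (r1 s a + r2 s a) / 2 + \<gamma> * next_exp Ms p s a (soft_value Ma QC)"
      and "C s a = \<gamma> * next_exp Ms p s a (\<lambda>x. R x + SC x)"
      using Q1 Q2 QC C s a unfolding optimal_soft_Q_def C_fixed_def R_def SC_def by blast+
    then show "QC s a - QS s a + C s a = \<gamma> * next_exp Ms p s a ?g"
      unfolding lin QS_def by (simp add: field_simps)
  next
    fix m x assume hm: "\<forall>s\<in>space Ms. \<forall>a\<in>space Ma. m \<le> QC s a - QS s a + C s a"
      and x: "x \<in> space Ms"
    have "soft_value Ma QS x + (m - SC x) \<le> soft_value Ma QC x"
    proof (rule soft_value_mono[OF bQS bQC x])
      fix a assume "a \<in> space Ma"
      with hm x le_SUP_action[OF bC x this] show "QS x a + (m - SC x) \<le> QC x a"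
        unfolding SC_def by force
    qed
    moreover have "2 * soft_value Ma QS x \<le> soft_value Ma Q1 x + soft_value Ma Q2 x"
      unfolding QS_def by (rule soft_value_midpoint_le[OF bQ1 bQ2 x])
    ultimately show "m \<le> ?g x"
      unfolding R_def QS_def renyi_half_soft_policy[OF bQ1 bQ2 x] by (simp add: field_simps)
  qed (use s a in auto)
  then show ?thesis by (simp add: QS_def field_simps)
qed

lemma policy_soft_Q_soft_policy_eq:
  assumes QS: "bounded_measurable_SA Ms Ma QS"
    and Q\<pi>: "policy_soft_Q Ms Ma p \<gamma> r (soft_policy Ma QS) Q\<pi>"
    and s: "s \<in> space Ms" and a: "a \<in> space Ma"
  shows "Q\<pi> s a = r s a + \<gamma> * next_exp Ms p s a
    (\<lambda>x. (\<integral>b. soft_policy Ma QS x b * (Q\<pi> x b - QS x b) \<partial>Ma) + soft_value Ma QS x)"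
proof -
  have "bounded_measurable_SA Ms Ma Q\<pi>"
    using Q\<pi> unfolding policy_soft_Q_def by blast
  with Q\<pi> s a show ?thesis
    unfolding policy_soft_Q_def using integral_soft_policy_minus_ln[OF QS]
    by (simp cong: next_exp_cong)
qed

lemma policy_soft_Q_ge_D_fixed:
  assumes QC: "optimal_soft_Q Ms Ma p \<gamma> r QC" and QS: "bounded_measurable_SA Ms Ma QS"
    and QC_le: "\<And>s a. s \<in> space Ms \<Longrightarrow> a \<in> space Ma \<Longrightarrow> QC s a \<le> QS s a"
    and le_C: "\<And>s a. s \<in> space Ms \<Longrightarrow> a \<in> space Ma \<Longrightarrow> QS s a \<le> QC s a + C s a"
    and C: "bounded_measurable_SA Ms Ma C"
    and D: "D_fixed Ms Ma p \<gamma> (soft_policy Ma QS) C D"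
    and Q\<pi>: "policy_soft_Q Ms Ma p \<gamma> r (soft_policy Ma QS) Q\<pi>"
    and s: "s \<in> space Ms" and a: "a \<in> space Ma"
  shows "QC s a - D s a \<le> Q\<pi> s a"
proof -
  have bQC: "bounded_measurable_SA Ms Ma QC" and bD: "bounded_measurable_SA Ms Ma D"
    and bQ\<pi>: "bounded_measurable_SA Ms Ma Q\<pi>"
    using QC D Q\<pi> unfolding optimal_soft_Q_def D_fixed_def policy_soft_Q_def by blast+
  have b\<Delta>: "bounded_measurable_SA Ms Ma (\<lambda>s a. Q\<pi> s a - QS s a)"
    and bCD: "bounded_measurable_SA Ms Ma (\<lambda>s a. C s a + D s a)"
    by (intro bounded_measurable_SA_diff bounded_measurable_SA_add bQ\<pi> QS C bD)+
  define P where "P = (\<lambda>x. \<integral>a. soft_policy Ma QS x a * (Q\<pi> x a - QS x a) \<partial>Ma)"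
  define W where "W = (\<lambda>x. \<integral>a. soft_policy Ma QS x a * (C x a + D x a) \<partial>Ma)"
  have bP: "bounded_measurable_S Ms P" and bW: "bounded_measurable_S Ms W"
    unfolding P_def W_def by (intro soft_policy_average_bounded_measurable QS b\<Delta> bCD)+
  note V = soft_value_bounded_measurable[OF QS] soft_value_bounded_measurable[OF bQC]
  let ?g = "\<lambda>x. (P x + soft_value Ma QS x - soft_value Ma QC x) + W x"
  have "0 \<le> Q\<pi> s a - QC s a + D s a"
  proof (rule nonneg_by_comparison[OF bounded_measurable_SA_add[OF bounded_measurable_SA_diff[OF bQ\<pi> bQC] bD]])
    show "bounded_measurable_S Ms ?g"
      using V bP bW by (intro bounded_measurable_S_add bounded_measurable_S_diff)
  next
    fix s a assume s: "s \<in> space Ms" and a: "a \<in> space Ma"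
    have lin: "next_exp Ms p s a ?g = (next_exp Ms p s a P + next_exp Ms p s a (soft_value Ma QS)
        - next_exp Ms p s a (soft_value Ma QC)) + next_exp Ms p s a W"
      using V bP bW s a by (simp add: next_exp_diff next_exp_add bounded_measurable_S_add
          bounded_measurable_S_diff)
    have "Q\<pi> s a = r s a + \<gamma> * next_exp Ms p s a (\<lambda>x. P x + soft_value Ma QS x)"
      unfolding P_def by (rule policy_soft_Q_soft_policy_eq[OF QS Q\<pi> s a])
    moreover have "QC s a = r s a + \<gamma> * next_exp Ms p s a (soft_value Ma QC)"
      and "D s a = \<gamma> * next_exp Ms p s a W"
      using QC D s a unfolding optimal_soft_Q_def D_fixed_def W_def by blast+
    ultimately show "Q\<pi> s a - QC s a + D s a = \<gamma> * next_exp Ms p s a ?g"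
      unfolding lin next_exp_add[OF bP V(1) s a] by (simp add: algebra_simps)
  next
    fix m x assume hm: "\<forall>s\<in>space Ms. \<forall>a\<in>space Ma. m \<le> Q\<pi> s a - QC s a + D s a"
      and x: "x \<in> space Ms"
    have "(\<integral>a. soft_policy Ma QS x a * m \<partial>Ma)
      \<le> (\<integral>a. soft_policy Ma QS x a * ((Q\<pi> x a - QS x a) + (C x a + D x a)) \<partial>Ma)"
    proof (rule integral_soft_policy_mono[OF QS bounded_measurable_SA_const
          bounded_measurable_SA_add[OF b\<Delta> bCD] x])
      fix a assume "a \<in> space Ma"
      with hm x le_C[OF x this] show "m \<le> (Q\<pi> x a - QS x a) + (C x a + D x a)" by force
    qed
    then have "m \<le> P x + W x"
      unfolding P_def W_def integral_soft_policy_add[OF QS b\<Delta> bCD x]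
      by (simp add: integral_soft_policy[OF QS x])
    moreover have "soft_value Ma QC x + 0 \<le> soft_value Ma QS x"
      by (rule soft_value_mono[OF bQC QS x]) (simp add: QC_le x)
    ultimately show "m \<le> ?g x" by simp
  qed (use s a in auto)
  then show ?thesis by simp
qed

end

theorem theorem1:
  fixes Ms :: "'s measure" and Ma :: "'a measure"
    and p :: "'s \<Rightarrow> 'a \<Rightarrow> 's \<Rightarrow> real" and \<gamma> :: real
    and r1 r2 Q1 Q2 QC C D Q\<pi> :: "'s \<Rightarrow> 'a \<Rightarrow> real"
  assumes mdp: "soft_mdp Ms Ma p \<gamma>"
    and r1: "bounded_measurable_SA Ms Ma r1"
    and r2: "bounded_measurable_SA Ms Ma r2"
    and Q1: "optimal_soft_Q Ms Ma p \<gamma> r1 Q1"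
    and Q2: "optimal_soft_Q Ms Ma p \<gamma> r2 Q2"
    and QC: "optimal_soft_Q Ms Ma p \<gamma> (\<lambda>s a. (r1 s a + r2 s a) / 2) QC"
    and C: "C_fixed Ms Ma p \<gamma> Q1 Q2 C"
    and D: "D_fixed Ms Ma p \<gamma> (soft_policy Ma (\<lambda>s a. (Q1 s a + Q2 s a) / 2)) C D"
    and Q\<pi>: "policy_soft_Q Ms Ma p \<gamma> (\<lambda>s a. (r1 s a + r2 s a) / 2)
               (soft_policy Ma (\<lambda>s a. (Q1 s a + Q2 s a) / 2)) Q\<pi>"
    and s: "s \<in> space Ms" and a: "a \<in> space Ma"
  shows "Q\<pi> s a \<ge> QC s a - D s a"
proof -
  interpret mdp Ms Ma p \<gamma> by (rule mdp.intro[OF mdp])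
  have QS: "bounded_measurable_SA Ms Ma (\<lambda>s a. (Q1 s a + Q2 s a) / 2)"
    using Q1 Q2 unfolding optimal_soft_Q_def
    by (intro bounded_measurable_SA_divide bounded_measurable_SA_add) blast+
  have "bounded_measurable_SA Ms Ma C"
    using C unfolding C_fixed_def by blast
  from policy_soft_Q_ge_D_fixed[OF QC QS optimal_soft_Q_avg_reward_le[OF Q1 Q2 QC]
      avg_optimal_soft_Q_le_add_C_fixed[OF Q1 Q2 QC C] this D Q\<pi> s a]
  show ?thesis by simp
qed

end
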